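(* In the setting described in the context, for every real $s>\frac n2$, $$\exp\Big(-\frac{s-\frac n2}{\tau^2}\Big)<\frac{g(s+1)}{g(s)}<\exp\Big(-\Big(1-\frac1{12\tau^2}\Big)\frac{s-\frac n2}{\tau^2}\Big).$$
   Context: Standing setting: $\Phi$ is the standard normal distribution function. Binomial law $\mathrm B_{m,p}(\{k\})=\binom mk p^k(1-p)^{m-k}$; hypergeometric law $\mathrm H_{m,r,b}(\{k\})=\binom rk\binom b{m-k}/\binom{r+b}m$ ($r,b\in\mathbb N_0$, $m\in\{0,\dots,r+b\}$, $k\in\mathbb Z$, binomial coefficients with non-integer lower index being $0$). $P$ is a symmetric (about its mean) hypergeometric or symmetric binomial law with mean $\frac n2$ and standard deviation $\sigma>0$; $N\in\mathbb N\cup\{\infty\}$ is a population size parameter of $P$ (i.e. $N=\infty$ and $P$ binomial, or $P=\mathrm H_{m,r,b}$ with $r+b=N$); $\sigma_0^2=\frac{N-1}N\sigma^2$ if $N<\infty$, $\sigma_0^2=\sigma^2$ if $N=\infty$. $\tau\in[\sigma_0,\sigma]$, $G(s)=\Phi((s-\frac n2)/\tau)$ and $g(s):=G(s)-G(s-1)$ for $s\in\mathbb R$. *)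

theory Defs
  imports "HOL-Probability.Probability" "HOL-Library.Extended_Nat"
begin

definition Phi :: "real \<Rightarrow> real" where
  "Phi x = measure (density lborel std_normal_density) {..x}"

text \<open>Laws on the integers, given as point-mass functions on the reals
  (mass 0 at non-integers).\<close>
definition binom_law :: "nat \<Rightarrow> real \<Rightarrow> real \<Rightarrow> real" where
  "binom_law m p x =
     (if x \<in> \<int> \<and> 0 \<le> x then
        real (m choose nat \<lfloor>x\<rfloor>) * p ^ nat \<lfloor>x\<rfloor> * (1 - p) ^ (m - nat \<lfloor>x\<rfloor>)
      else 0)"

definition hyper_law :: "nat \<Rightarrow> nat \<Rightarrow> nat \<Rightarrow> real \<Rightarrow> real" where
  "hyper_law m r b x =
     (if x \<in> \<int> \<and> 0 \<le> x \<and> x \<le> real m then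
        real (r choose nat \<lfloor>x\<rfloor>) * real (b choose (m - nat \<lfloor>x\<rfloor>)) / real ((r + b) choose m)
      else 0)"

definition law_mean :: "(real \<Rightarrow> real) \<Rightarrow> real" where
  "law_mean P = (\<Sum>\<^sub>\<infinity> x. x * P x)"

definition law_var :: "(real \<Rightarrow> real) \<Rightarrow> real" where
  "law_var P = (\<Sum>\<^sub>\<infinity> x. (x - law_mean P)\<^sup>2 * P x)"

definition sym_about_mean :: "(real \<Rightarrow> real) \<Rightarrow> bool" where
  "sym_about_mean P \<longleftrightarrow> (\<forall>x. P (law_mean P + x) = P (law_mean P - x))"

definition sigma0 :: "enat \<Rightarrow> real \<Rightarrow> real" where
  "sigma0 N \<sigma> = (case N of enat k \<Rightarrow> sqrt ((real k - 1) / real k) * \<sigma> | \<infinity> \<Rightarrow> \<sigma>)"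

definition GG :: "real \<Rightarrow> real \<Rightarrow> real \<Rightarrow> real" where
  "GG n \<tau> s = Phi ((s - n / 2) / \<tau>)"

definition gg :: "real \<Rightarrow> real \<Rightarrow> real \<Rightarrow> real" where
  "gg n \<tau> s = GG n \<tau> s - GG n \<tau> (s - 1)"

end

theory Submission imports Defs begin

text \<open>Put \<open>x = s - n/2\<close>. Pairing the normal density at \<open>c \<pm> w\<close> writes each window mass as
  \<open>Phi ((c + 1/2)/\<tau>) - Phi ((c - 1/2)/\<tau>) = const \<cdot> exp (-c\<^sup>2/(2\<tau>\<^sup>2)) \<cdot> J c\<close>, where \<open>J c\<close> is the
  integral of \<open>exp (-w\<^sup>2/(2\<tau>\<^sup>2)) cosh (c w/\<tau>\<^sup>2)\<close> over \<open>w \<in> [0, 1/2]\<close>. Hence \<open>g(s+1)/g(s)\<close> equals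
  \<open>exp (-x/\<tau>\<^sup>2) \<cdot> J (x + 1/2) / J (x - 1/2)\<close>. Since \<open>J\<close> increases strictly in \<open>\<bar>c\<bar>\<close>, the ratio
  exceeds \<open>exp (-x/\<tau>\<^sup>2)\<close>. For the upper bound, \<open>J c \<cdot> exp (-c\<^sup>2/(24\<tau>\<^sup>4))\<close> strictly decreases
  for \<open>c \<ge> 0\<close>: its derivative is a positive multiple of the Gaussian-weighted integral of the kernel
  \<open>w sinh (b w) - (b/12) cosh (b w)\<close>, \<open>b = c/\<tau>\<^sup>2\<close>, which changes sign once, from negative to
  positive, and has negative plain integral over \<open>[0, 1/2]\<close>; the decreasing weight only makes the
  integral smaller. The hypotheses on the law serve only to ensure \<open>\<tau> > 0\<close>.\<close>

lemma Phi_diff_eq_integral: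
  assumes "a \<le> b"
  shows "Phi b - Phi a = integral {a..b} std_normal_density"
proof -
  define D where "D = density lborel std_normal_density"
  interpret prob_space D unfolding D_def by (rule prob_space_normal_density) simp
  have "measure D {..b} - measure D {..a} = measure D ({..b} - {..a})"
    using assms by (subst finite_measure_Diff) (auto simp: D_def)
  also have "{..b} - {..a} = {a<..b}" by auto
  finally have Phi_eq: "Phi b - Phi a = measure D {a<..b}" unfolding Phi_def D_def by simp
  define I where "I = integral {a..b} std_normal_density"
  have "continuous_on {a..b} std_normal_density"
    unfolding std_normal_density_def by (intro continuous_intros) auto
  then have "(std_normal_density has_integral I) {a..b}"
    unfolding I_def using integrable_continuous_real by blast
  then have I: "(std_normal_density has_integral I) {a<..b}"
    by (subst has_integral_spike_set_eq[where T="{a..b}"])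
       (auto intro: negligible_subset[of "{a}"] negligible_subset[of "{}"])
  have "emeasure D {a<..b} = (\<integral>\<^sup>+ x. ennreal (std_normal_density x) * indicator {a<..b} x \<partial>lborel)"
    unfolding D_def by (subst emeasure_density) auto
  also have "\<dots> = ennreal I"
    by (rule nn_integral_has_integral_lebesgue'[OF _ I]) simp
  finally have "emeasure D {a<..b} = ennreal I" .
  moreover have "I \<ge> 0" using I has_integral_nonneg by (metis normal_density_nonneg)
  ultimately show ?thesis using Phi_eq I_def by (simp add: measure_def)
qed

lemma Phi_has_real_derivative: "(Phi has_real_derivative std_normal_density t) (at t)"
proof -
  have "continuous_on {t-1..t+1} std_normal_density"
    unfolding std_normal_density_def by (intro continuous_intros) auto
  then have "((\<lambda>x. integral {t-1..x} std_normal_density) has_real_derivative std_normal_density t)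
      (at t within {t-1..t+1})"
    by (rule integral_has_real_derivative) auto
  then have "((\<lambda>x. Phi (t-1) + integral {t-1..x} std_normal_density)
      has_real_derivative std_normal_density t) (at t)"
    by (subst (asm) at_within_interior) (auto intro!: derivative_eq_intros)
  then show ?thesis
  proof (rule has_field_derivative_transform_within_open[where S="{t-1<..}"])
    show "Phi (t - 1) + integral {t - 1..x} std_normal_density = Phi x" if "x \<in> {t-1<..}" for x
      using that Phi_diff_eq_integral[of "t-1" x] by simp
  qed auto
qed

definition gauss_cosh_integral :: "real \<Rightarrow> real \<Rightarrow> real" where
  "gauss_cosh_integral \<tau> c = integral {0..1/2} (\<lambda>w. exp (-(w\<^sup>2) / (2*\<tau>\<^sup>2)) * cosh (c*w/\<tau>\<^sup>2))"

lemma gauss_cosh_integral_has_integral: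
  assumes "\<tau> > 0"
  shows "((\<lambda>w. exp (-(w\<^sup>2) / (2*\<tau>\<^sup>2)) * cosh (c*w/\<tau>\<^sup>2)) has_integral gauss_cosh_integral \<tau> c) {0..1/2}"
proof -
  have "continuous_on {0..1/2} (\<lambda>w. exp (-(w\<^sup>2) / (2*\<tau>\<^sup>2)) * cosh (c*w/\<tau>\<^sup>2))"
    using assms by (intro continuous_intros) auto
  then show ?thesis unfolding gauss_cosh_integral_def using integrable_continuous_real by blast
qed

lemma std_normal_density_add_diff:
  assumes "\<tau> > 0"
  shows "std_normal_density ((c+w)/\<tau>) + std_normal_density ((c-w)/\<tau>)
     = 2 / sqrt (2*pi) * exp (-(c\<^sup>2)/(2*\<tau>\<^sup>2)) * (exp (-(w\<^sup>2) / (2*\<tau>\<^sup>2)) * cosh (c*w/\<tau>\<^sup>2))"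
proof -
  have "exp (- ((c+w)/\<tau>)\<^sup>2 / 2) = exp (-(c\<^sup>2)/(2*\<tau>\<^sup>2)) * exp (-(w\<^sup>2) / (2*\<tau>\<^sup>2)) * exp (-(c*w/\<tau>\<^sup>2))"
       "exp (- ((c-w)/\<tau>)\<^sup>2 / 2) = exp (-(c\<^sup>2)/(2*\<tau>\<^sup>2)) * exp (-(w\<^sup>2) / (2*\<tau>\<^sup>2)) * exp (c*w/\<tau>\<^sup>2)"
    unfolding exp_add[symmetric] using assms
    by (auto intro!: arg_cong[where f=exp] simp: field_simps power2_eq_square)
  then show ?thesis unfolding std_normal_density_def cosh_def by (simp add: field_simps)
qed

lemma Phi_window_eq:
  assumes "\<tau> > 0"
  shows "Phi ((c+1/2)/\<tau>) - Phi ((c-1/2)/\<tau>)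
     = 2 / (sqrt (2*pi) * \<tau>) * exp (-(c\<^sup>2)/(2*\<tau>\<^sup>2)) * gauss_cosh_integral \<tau> c"
proof -
  define F where "F w = \<tau> * (Phi ((c+w)/\<tau>) - Phi ((c-w)/\<tau>))" for w
  have "((\<lambda>w. std_normal_density ((c+w)/\<tau>) + std_normal_density ((c-w)/\<tau>))
      has_integral (F (1/2) - F 0)) {0..1/2}"
  proof (rule fundamental_theorem_of_calculus)
    fix x :: real
    have "(F has_real_derivative std_normal_density ((c+x)/\<tau>) + std_normal_density ((c-x)/\<tau>)) (at x)"
      unfolding F_def using assms
      by (auto intro!: derivative_eq_intros Phi_has_real_derivative[THEN DERIV_chain2] simp: field_simps)
    then show "(F has_vector_derivative std_normal_density ((c+x)/\<tau>) + std_normal_density ((c-x)/\<tau>))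
        (at x within {0..1/2})"
      by (simp add: has_real_derivative_iff_has_vector_derivative has_vector_derivative_at_within)
  qed simp
  then have "((\<lambda>w. 2 / sqrt (2*pi) * exp (-(c\<^sup>2)/(2*\<tau>\<^sup>2)) * (exp (-(w\<^sup>2) / (2*\<tau>\<^sup>2)) * cosh (c*w/\<tau>\<^sup>2)))
      has_integral (F (1/2) - F 0)) {0..1/2}"
    using std_normal_density_add_diff[OF assms] by simp
  then have "F (1/2) - F 0 = 2 / sqrt (2*pi) * exp (-(c\<^sup>2)/(2*\<tau>\<^sup>2)) * gauss_cosh_integral \<tau> c"
    using has_integral_unique has_integral_mult_right[OF gauss_cosh_integral_has_integral[OF assms]]
    by blast
  then show ?thesis unfolding F_def using assms by (simp add: field_simps)
qed

lemma gauss_cosh_integral_pos: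
  assumes "\<tau> > 0"
  shows "gauss_cosh_integral \<tau> c > 0"
proof -
  have "integral {0..1/2::real} (\<lambda>w. 0::real) < gauss_cosh_integral \<tau> c"
    unfolding gauss_cosh_integral_def using assms by (intro integral_less_real continuous_intros) auto
  then show ?thesis by simp
qed

lemma gauss_cosh_integral_abs: "gauss_cosh_integral \<tau> \<bar>c\<bar> = gauss_cosh_integral \<tau> c"
  unfolding gauss_cosh_integral_def by (cases "c \<ge> 0") auto

lemma gauss_cosh_integral_abs_strict_mono:
  assumes "\<tau> > 0" and "\<bar>c\<bar> < d"
  shows "gauss_cosh_integral \<tau> c < gauss_cosh_integral \<tau> d"
proof -
  have "gauss_cosh_integral \<tau> \<bar>c\<bar> < gauss_cosh_integral \<tau> d"
    unfolding gauss_cosh_integral_def using assms(1)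
  proof (intro integral_less_real continuous_intros)
    fix w :: real assume "w \<in> {0<..<1/2}"
    then have "cosh (\<bar>c\<bar> * w / \<tau>\<^sup>2) < cosh (d * w / \<tau>\<^sup>2)"
      using assms by (intro cosh_real_strict_mono divide_strict_right_mono mult_strict_right_mono) auto
    then show "exp (-(w\<^sup>2) / (2*\<tau>\<^sup>2)) * cosh (\<bar>c\<bar> * w / \<tau>\<^sup>2) < exp (-(w\<^sup>2) / (2*\<tau>\<^sup>2)) * cosh (d * w / \<tau>\<^sup>2)"
      by simp
  qed auto
  then show ?thesis by (simp add: gauss_cosh_integral_abs)
qed

lemma sinh_less_mult_cosh:
  fixes c :: real
  assumes "c > 0"
  shows "sinh c < c * cosh c"
proof -
  have "(\<lambda>x. x * cosh x - sinh x) 0 < (\<lambda>x. x * cosh x - sinh x) c"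
  proof (rule DERIV_pos_imp_increasing_open[OF assms])
    fix x :: real assume "0 < x"
    then show "\<exists>y. ((\<lambda>x. x * cosh x - sinh x) has_real_derivative y) (at x) \<and> y > 0"
      by (intro exI[of _ "x * sinh x"] conjI) (auto intro!: derivative_eq_intros)
  qed (intro continuous_intros)
  then show ?thesis by simp
qed

lemma mult_cosh_less_sinh_cubic:
  fixes c :: real
  assumes "c > 0"
  shows "3 * c * cosh c < (3 + c\<^sup>2) * sinh c"
proof -
  have "(\<lambda>x. (3 + x\<^sup>2) * sinh x - 3 * x * cosh x) 0 < (\<lambda>x. (3 + x\<^sup>2) * sinh x - 3 * x * cosh x) c"
  proof (rule DERIV_pos_imp_increasing_open[OF assms])
    fix x :: real assume "0 < x"
    then show "\<exists>y. ((\<lambda>x. (3 + x\<^sup>2) * sinh x - 3 * x * cosh x) has_real_derivative y) (at x) \<and> y > 0"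
      using sinh_less_mult_cosh[of x]
      by (intro exI[of _ "x * (x * cosh x - sinh x)"] conjI)
         (auto intro!: derivative_eq_intros simp: algebra_simps power2_eq_square)
  qed (intro continuous_intros)
  then show ?thesis by simp
qed

text \<open>A weighted form of the second mean value theorem: against a kernel that changes sign once,
  from negative to positive, a decreasing weight can be replaced by its value at the sign change.\<close>

lemma integral_mult_antitone_le:
  fixes \<rho> k :: "real \<Rightarrow> real"
  assumes "continuous_on {a..b} \<rho>" "continuous_on {a..b} k" "antimono_on {a..b} \<rho>"
    and w0: "w0 \<in> {a..b}"
    and nonpos: "\<And>w. w \<in> {a..w0} \<Longrightarrow> k w \<le> 0"
    and nonneg: "\<And>w. w \<in> {w0<..b} \<Longrightarrow> 0 \<le> k w"
  shows "integral {a..b} (\<lambda>w. \<rho> w * k w) \<le> \<rho> w0 * integral {a..b} k"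
proof -
  have "integral {a..b} (\<lambda>w. \<rho> w * k w) \<le> integral {a..b} (\<lambda>w. \<rho> w0 * k w)"
  proof (rule integral_le)
    show "(\<lambda>w. \<rho> w * k w) integrable_on {a..b}" "(\<lambda>w. \<rho> w0 * k w) integrable_on {a..b}"
      using assms(1,2) by (auto intro!: integrable_continuous_real continuous_intros)
    show "\<rho> w * k w \<le> \<rho> w0 * k w" if w: "w \<in> {a..b}" for w
    proof (cases "w \<le> w0")
      case True
      then have "\<rho> w0 \<le> \<rho> w" using monotone_onD[OF assms(3)] w w0 by auto
      then show ?thesis using nonpos[of w] w True by (simp add: mult_right_mono_neg)
    next
      case False
      then have "\<rho> w \<le> \<rho> w0" using monotone_onD[OF assms(3)] w w0 by auto
      then show ?thesis using nonneg[of w] w False by (simp add: mult_right_mono)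
    qed
  qed
  then show ?thesis by simp
qed

lemma sinh_cosh_kernel_sign_change:
  fixes a b :: real
  assumes "0 \<le> a" "b > 0"
  shows "\<exists>w0\<in>{0..a}. (\<forall>w\<in>{0..w0}. w * sinh (b*w) - b/12 * cosh (b*w) \<le> 0)
                     \<and> (\<forall>w\<in>{w0<..a}. 0 \<le> w * sinh (b*w) - b/12 * cosh (b*w))"
proof -
  define m where "m w = w * tanh (b*w) - b/12" for w
  have kernel_eq: "w * sinh (b*w) - b/12 * cosh (b*w) = cosh (b*w) * m w" for w
    by (simp add: m_def tanh_def field_simps)
  have mono: "m w \<le> m w'" if "0 \<le> w" "w \<le> w'" for w w'
    using that assms by (auto simp: m_def intro!: mult_mono)
  obtain w0 where w0: "w0 \<in> {0..a}" "\<forall>w\<in>{0..w0}. m w \<le> 0" "\<forall>w\<in>{w0<..a}. 0 \<le> m w"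
  proof (cases "m a \<le> 0")
    case True
    then show ?thesis using assms(1) mono by (intro that[of a]) force+
  next
    case False
    have "m 0 < 0" using assms by (simp add: m_def)
    moreover have "continuous_on {0..a} m"
      unfolding m_def by (intro continuous_intros) (auto simp: cosh_real_pos intro: less_imp_neq[symmetric])
    ultimately obtain w0 where "0 \<le> w0" "w0 \<le> a" "m w0 = 0"
      using IVT'[of m 0 0 a] False assms(1) by auto
    then show ?thesis using mono by (intro that[of w0]) force+
  qed
  then show ?thesis
    unfolding kernel_eq by (intro bexI[OF _ w0(1)]) (auto simp: mult_nonneg_nonpos)
qed

lemma sinh_cosh_kernel_integral_neg:
  fixes b :: real
  assumes "b > 0"
  shows "integral {0..1/2} (\<lambda>w. w * sinh (b*w) - b/12 * cosh (b*w)) < 0"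
proof -
  define G where "G w = w * cosh (b*w) / b - sinh (b*w) / b\<^sup>2 - sinh (b*w) / 12" for w
  have "((\<lambda>w. w * sinh (b*w) - b/12 * cosh (b*w)) has_integral (G (1/2) - G 0)) {0..1/2}"
  proof (rule fundamental_theorem_of_calculus)
    fix x :: real
    have "(G has_real_derivative x * sinh (b*x) - b/12 * cosh (b*x)) (at x)"
      unfolding G_def using assms by (auto intro!: derivative_eq_intros simp: field_simps power2_eq_square)
    then show "(G has_vector_derivative x * sinh (b*x) - b/12 * cosh (b*x)) (at x within {0..1/2})"
      by (simp add: has_real_derivative_iff_has_vector_derivative has_vector_derivative_at_within)
  qed simp
  then have "integral {0..1/2} (\<lambda>w. w * sinh (b*w) - b/12 * cosh (b*w)) = G (1/2) - G 0"
    by (rule integral_unique)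
  also have "\<dots> = (3 * (b/2) * cosh (b/2) - (3 + (b/2)\<^sup>2) * sinh (b/2)) / (12 * (b/2)\<^sup>2)"
    unfolding G_def using assms by (simp add: field_simps power2_eq_square)
  also have "\<dots> < 0"
    using mult_cosh_less_sinh_cubic[of "b/2"] assms by (simp add: divide_neg_pos)
  finally show ?thesis .
qed

lemma gauss_sinh_cosh_kernel_integral_neg:
  fixes \<tau> b :: real
  assumes "\<tau> > 0" "b > 0"
  shows "integral {0..1/2} (\<lambda>w. exp (-(w\<^sup>2) / (2*\<tau>\<^sup>2)) * (w * sinh (b*w) - b/12 * cosh (b*w))) < 0"
proof -
  obtain w0 where w0: "w0 \<in> {0..1/2}"
    "\<forall>w\<in>{0..w0}. w * sinh (b*w) - b/12 * cosh (b*w) \<le> 0"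
    "\<forall>w\<in>{w0<..1/2}. 0 \<le> w * sinh (b*w) - b/12 * cosh (b*w)"
    using sinh_cosh_kernel_sign_change[of "1/2" b] assms by auto
  have "antimono_on {0..1/2} (\<lambda>w. exp (-(w\<^sup>2) / (2*\<tau>\<^sup>2)))"
    using assms(1) by (intro monotone_onI) (auto simp: divide_right_mono power_mono)
  then have "integral {0..1/2} (\<lambda>w. exp (-(w\<^sup>2) / (2*\<tau>\<^sup>2)) * (w * sinh (b*w) - b/12 * cosh (b*w)))
      \<le> exp (-(w0\<^sup>2) / (2*\<tau>\<^sup>2)) * integral {0..1/2} (\<lambda>w. w * sinh (b*w) - b/12 * cosh (b*w))"
    using w0 assms(1) by (intro integral_mult_antitone_le continuous_intros) auto
  also have "\<dots> < 0"
    using sinh_cosh_kernel_integral_neg[OF assms(2)] by (simp add: mult_pos_neg)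
  finally show ?thesis .
qed

lemma gauss_cosh_integral_has_real_derivative:
  assumes "\<tau> > 0"
  shows "(gauss_cosh_integral \<tau> has_real_derivative
      integral {0..1/2} (\<lambda>w. exp (-(w\<^sup>2) / (2*\<tau>\<^sup>2)) * (sinh (c*w/\<tau>\<^sup>2) * (w/\<tau>\<^sup>2)))) (at c)"
proof -
  have "((\<lambda>x. integral (cbox 0 (1/2)) (\<lambda>w. exp (-(w\<^sup>2) / (2*\<tau>\<^sup>2)) * cosh (x*w/\<tau>\<^sup>2))) has_field_derivative
      integral (cbox 0 (1/2)) (\<lambda>w. exp (-(w\<^sup>2) / (2*\<tau>\<^sup>2)) * (sinh (c*w/\<tau>\<^sup>2) * (w/\<tau>\<^sup>2)))) (at c within UNIV)"
  proof (rule leibniz_rule_field_derivative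
      [where fx="\<lambda>x w. exp (-(w\<^sup>2) / (2*\<tau>\<^sup>2)) * (sinh (x*w/\<tau>\<^sup>2) * (w/\<tau>\<^sup>2))"])
    fix x t :: real
    show "((\<lambda>x. exp (-(t\<^sup>2) / (2*\<tau>\<^sup>2)) * cosh (x*t/\<tau>\<^sup>2)) has_field_derivative
        exp (-(t\<^sup>2) / (2*\<tau>\<^sup>2)) * (sinh (x*t/\<tau>\<^sup>2) * (t/\<tau>\<^sup>2))) (at x within UNIV)"
      using assms by (auto intro!: derivative_eq_intros simp: field_simps)
    show "(\<lambda>w. exp (-(w\<^sup>2) / (2*\<tau>\<^sup>2)) * cosh (x*w/\<tau>\<^sup>2)) integrable_on cbox 0 (1/2)"
      using assms by (intro integrable_continuous continuous_intros) auto
  next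
    show "continuous_on (UNIV \<times> cbox 0 (1/2))
        (\<lambda>(x, w). exp (-(w\<^sup>2) / (2*\<tau>\<^sup>2)) * (sinh (x*w/\<tau>\<^sup>2) * (w/\<tau>\<^sup>2)))"
      using assms by (auto simp: case_prod_beta intro!: continuous_intros)
  qed auto
  then show ?thesis unfolding gauss_cosh_integral_def[abs_def] by simp
qed

lemma gauss_cosh_integral_derivative_less:
  assumes "\<tau> > 0" "c > 0"
  shows "integral {0..1/2} (\<lambda>w. exp (-(w\<^sup>2) / (2*\<tau>\<^sup>2)) * (sinh (c*w/\<tau>\<^sup>2) * (w/\<tau>\<^sup>2)))
       < c / (12*\<tau>^4) * gauss_cosh_integral \<tau> c"
proof -
  define b where "b = c/\<tau>\<^sup>2"
  have "(\<lambda>w. exp (-(w\<^sup>2) / (2*\<tau>\<^sup>2)) * (sinh (c*w/\<tau>\<^sup>2) * (w/\<tau>\<^sup>2))) integrable_on {0..1/2}"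
       "(\<lambda>w. c / (12*\<tau>^4) * (exp (-(w\<^sup>2) / (2*\<tau>\<^sup>2)) * cosh (c*w/\<tau>\<^sup>2))) integrable_on {0..1/2}"
    using assms(1) by (auto intro!: integrable_continuous_real continuous_intros)
  then have "integral {0..1/2} (\<lambda>w. exp (-(w\<^sup>2) / (2*\<tau>\<^sup>2)) * (sinh (c*w/\<tau>\<^sup>2) * (w/\<tau>\<^sup>2)))
        - c / (12*\<tau>^4) * gauss_cosh_integral \<tau> c
      = integral {0..1/2} (\<lambda>w. exp (-(w\<^sup>2) / (2*\<tau>\<^sup>2)) * (sinh (c*w/\<tau>\<^sup>2) * (w/\<tau>\<^sup>2))
        - c / (12*\<tau>^4) * (exp (-(w\<^sup>2) / (2*\<tau>\<^sup>2)) * cosh (c*w/\<tau>\<^sup>2)))"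
    unfolding gauss_cosh_integral_def by (subst integral_diff) simp_all
  also have "\<dots> = integral {0..1/2}
      (\<lambda>w. 1/\<tau>\<^sup>2 * (exp (-(w\<^sup>2) / (2*\<tau>\<^sup>2)) * (w * sinh (b*w) - b/12 * cosh (b*w))))"
    using assms(1) by (intro integral_cong) (simp add: b_def field_simps eval_nat_numeral)
  also have "\<dots> < 0"
    using gauss_sinh_cosh_kernel_integral_neg[of \<tau> b] assms by (simp add: b_def divide_neg_pos)
  finally show ?thesis by simp
qed

lemma gauss_cosh_integral_damped_strict_antimono:
  assumes "\<tau> > 0" "0 \<le> u" "u < v"
  shows "gauss_cosh_integral \<tau> v * exp (-(v\<^sup>2)/(24*\<tau>^4))
       < gauss_cosh_integral \<tau> u * exp (-(u\<^sup>2)/(24*\<tau>^4))"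
proof -
  define J' where
    "J' x = integral {0..1/2} (\<lambda>w. exp (-(w\<^sup>2) / (2*\<tau>\<^sup>2)) * (sinh (x*w/\<tau>\<^sup>2) * (w/\<tau>\<^sup>2)))" for x
  have deriv: "((\<lambda>c. gauss_cosh_integral \<tau> c * exp (-(c\<^sup>2)/(24*\<tau>^4))) has_real_derivative
      exp (-(x\<^sup>2)/(24*\<tau>^4)) * (J' x - x/(12*\<tau>^4) * gauss_cosh_integral \<tau> x)) (at x)" for x
    using assms(1) unfolding J'_def
    by (auto intro!: derivative_eq_intros gauss_cosh_integral_has_real_derivative
             simp: field_simps eval_nat_numeral)
  show ?thesis
  proof (rule DERIV_neg_imp_decreasing_open[OF assms(3)])
    fix x assume "u < x"
    then have "J' x - x/(12*\<tau>^4) * gauss_cosh_integral \<tau> x < 0"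
      using gauss_cosh_integral_derivative_less[of \<tau> x] assms unfolding J'_def by simp
    then show "\<exists>y. ((\<lambda>c. gauss_cosh_integral \<tau> c * exp (-(c\<^sup>2)/(24*\<tau>^4))) has_real_derivative y) (at x)
        \<and> y < 0"
      using deriv by (intro exI conjI) (auto simp: mult_pos_neg)
  next
    show "continuous_on {u..v} (\<lambda>c. gauss_cosh_integral \<tau> c * exp (-(c\<^sup>2)/(24*\<tau>^4)))"
      using deriv by (intro continuous_at_imp_continuous_on ballI DERIV_isCont) blast
  qed
qed

lemma Phi_window_ratio_bounds:
  fixes \<tau> x :: real
  assumes tau: "\<tau> > 0" and x: "x > 0"
  shows "exp (- x / \<tau>\<^sup>2) < (Phi ((x+1)/\<tau>) - Phi (x/\<tau>)) / (Phi (x/\<tau>) - Phi ((x-1)/\<tau>))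
       \<and> (Phi ((x+1)/\<tau>) - Phi (x/\<tau>)) / (Phi (x/\<tau>) - Phi ((x-1)/\<tau>))
           < exp (- (1 - 1 / (12 * \<tau>\<^sup>2)) * x / \<tau>\<^sup>2)"
proof -
  define J where "J = gauss_cosh_integral \<tau>"
  define c1 where "c1 = x + 1/2"
  define c0 where "c0 = x - 1/2"
  have J_pos: "J c > 0" for c unfolding J_def using gauss_cosh_integral_pos[OF tau] .
  have upper_window: "Phi ((x+1)/\<tau>) - Phi (x/\<tau>) = 2 / (sqrt (2*pi) * \<tau>) * exp (-(c1\<^sup>2)/(2*\<tau>\<^sup>2)) * J c1"
    using Phi_window_eq[OF tau, of c1] unfolding c1_def J_def by (simp add: add.assoc)
  have lower_window: "Phi (x/\<tau>) - Phi ((x-1)/\<tau>) = 2 / (sqrt (2*pi) * \<tau>) * exp (-(c0\<^sup>2)/(2*\<tau>\<^sup>2)) * J c0"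
    using Phi_window_eq[OF tau, of c0] unfolding c0_def J_def by (simp add: algebra_simps)
  have "exp (-(c1\<^sup>2)/(2*\<tau>\<^sup>2)) = exp (-(c0\<^sup>2)/(2*\<tau>\<^sup>2)) * exp (- x / \<tau>\<^sup>2)"
    unfolding exp_add[symmetric] c1_def c0_def using tau
    by (intro arg_cong[where f=exp]) (simp add: field_simps power2_eq_square)
  then have ratio_eq: "(Phi ((x+1)/\<tau>) - Phi (x/\<tau>)) / (Phi (x/\<tau>) - Phi ((x-1)/\<tau>))
      = exp (- x / \<tau>\<^sup>2) * (J c1 / J c0)"
    unfolding upper_window lower_window using tau J_pos[of c0] by (simp add: field_simps)
  have c0_c1: "\<bar>c0\<bar> < c1" unfolding c0_def c1_def using x by auto
  have lower: "1 < J c1 / J c0"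
    using gauss_cosh_integral_abs_strict_mono[OF tau c0_c1] J_pos[of c0] unfolding J_def by simp
  have "J c1 * exp (-(c1\<^sup>2)/(24*\<tau>^4)) < J c0 * exp (-(c0\<^sup>2)/(24*\<tau>^4))"
    using gauss_cosh_integral_damped_strict_antimono[OF tau _ c0_c1]
    unfolding J_def by (simp add: gauss_cosh_integral_abs)
  moreover have "exp (-(c0\<^sup>2)/(24*\<tau>^4)) = exp (-(c1\<^sup>2)/(24*\<tau>^4)) * exp (x / (12*\<tau>^4))"
    unfolding exp_add[symmetric] c1_def c0_def using tau
    by (intro arg_cong[where f=exp]) (simp add: field_simps power2_eq_square)
  ultimately have upper: "J c1 / J c0 < exp (x / (12*\<tau>^4))"
    using J_pos[of c0] by (simp add: field_simps)
  have exp_combined: "exp (- x / \<tau>\<^sup>2) * exp (x / (12*\<tau>^4)) = exp (- (1 - 1 / (12 * \<tau>\<^sup>2)) * x / \<tau>\<^sup>2)"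
    unfolding exp_add[symmetric] using tau
    by (intro arg_cong[where f=exp]) (simp add: field_simps eval_nat_numeral)
  show ?thesis unfolding ratio_eq
  proof
    show "exp (- x / \<tau>\<^sup>2) < exp (- x / \<tau>\<^sup>2) * (J c1 / J c0)"
      using mult_strict_left_mono[OF lower, of "exp (- x / \<tau>\<^sup>2)"] by simp
    show "exp (- x / \<tau>\<^sup>2) * (J c1 / J c0) < exp (- (1 - 1 / (12 * \<tau>\<^sup>2)) * x / \<tau>\<^sup>2)"
      using mult_strict_left_mono[OF upper, of "exp (- x / \<tau>\<^sup>2)"] exp_combined by simp
  qed
qed

lemma hyper_law_point_mass:
  assumes "m \<le> r + b" "r + b \<le> 1"
  shows "hyper_law m r b = (\<lambda>x. if x = real (min m r) then 1 else 0)"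
proof
  fix x :: real
  have int01: "x = 0 \<or> x = 1" if "x \<in> \<int>" "0 \<le> x" "x \<le> 1"
    using that by (auto elim!: Ints_cases)
  consider "m = 0" | "m = 1" "r = 1" "b = 0" | "m = 1" "r = 0" "b = 1"
    using assms by linarith
  then show "hyper_law m r b x = (if x = real (min m r) then 1 else 0)"
    by cases (auto simp: hyper_law_def dest: int01)
qed

lemma law_var_point_mass: "law_var (\<lambda>x. if x = k then 1 else 0) = 0"
proof -
  have "law_mean (\<lambda>x. if x = k then 1 else 0) = k"
    unfolding law_mean_def by (subst infsum_cong_neutral[where T="{k}"]) auto
  then show ?thesis unfolding law_var_def by (intro infsum_0) auto
qed

lemma sigma0_pos:
  assumes law: "(N = \<infinity> \<and> (\<exists>m p. 0 \<le> p \<and> p \<le> 1 \<and> P = binom_law m p))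
              \<or> (\<exists>m r b. m \<le> r + b \<and> N = enat (r + b) \<and> P = hyper_law m r b)"
    and var: "law_var P = \<sigma>\<^sup>2" and sigma: "\<sigma> > 0"
  shows "sigma0 N \<sigma> > 0"
proof (cases N)
  case infinity
  then show ?thesis using sigma by (simp add: sigma0_def)
next
  case (enat k)
  then obtain m r b where mrb: "m \<le> r + b" "k = r + b" "P = hyper_law m r b"
    using law by auto
  show ?thesis
  proof (cases "k \<ge> 2")
    case True
    then show ?thesis using enat sigma by (simp add: sigma0_def)
  next
    case False
    then have "law_var P = 0"
      using mrb hyper_law_point_mass[of m r b] law_var_point_mass by simp
    then show ?thesis using var sigma by simp
  qed
qed

theorem lemma4p1:
  fixes P :: "real \<Rightarrow> real" and N :: enat and n \<sigma> \<tau> s :: real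
  assumes law: "(N = \<infinity> \<and> (\<exists>m p. 0 \<le> p \<and> p \<le> 1 \<and> P = binom_law m p))
              \<or> (\<exists>m r b. m \<le> r + b \<and> N = enat (r + b) \<and> P = hyper_law m r b)"
    and sym: "sym_about_mean P"
    and mean: "law_mean P = n / 2"
    and sigma_pos: "\<sigma> > 0"
    and var: "law_var P = \<sigma>\<^sup>2"
    and tau: "sigma0 N \<sigma> \<le> \<tau>" "\<tau> \<le> \<sigma>"
    and s: "s > n / 2"
  shows "exp (- (s - n / 2) / \<tau>\<^sup>2) < gg n \<tau> (s + 1) / gg n \<tau> s
       \<and> gg n \<tau> (s + 1) / gg n \<tau> s < exp (- (1 - 1 / (12 * \<tau>\<^sup>2)) * (s - n / 2) / \<tau>\<^sup>2)"
proof -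
  have "\<tau> > 0" using sigma0_pos[OF law var sigma_pos] tau(1) by linarith
  moreover have "s - n/2 > 0" using s by simp
  moreover have "gg n \<tau> (s + 1) = Phi ((s - n/2 + 1)/\<tau>) - Phi ((s - n/2)/\<tau>)"
    and "gg n \<tau> s = Phi ((s - n/2)/\<tau>) - Phi ((s - n/2 - 1)/\<tau>)"
    unfolding gg_def GG_def by (simp_all add: algebra_simps)
  ultimately show ?thesis using Phi_window_ratio_bounds by presburger
qed

end
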